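(* Let $f:\mathbb{R}^d\to\mathbb{R}$ be $L$-smooth ($L>0$) and assume $f$ has a minimizer $\mathbf{x}^\star$. Let $\sigma>0$ and $\epsilon\ge\frac{4\sigma^2Ld}{3}$. Then for every $\mathbf{x}$ with $f(\mathbf{x})-f(\mathbf{x}^\star)\le\frac{\sigma^2Ld}{4}$ and every $\mathbf{y}$ with $f(\mathbf{y})-f(\mathbf{x}^\star)>\epsilon$, one has $f_\sigma(\mathbf{x})<f_\sigma(\mathbf{y})$.
   Context: $f_\sigma(\mathbf{x})=\pi^{-d/2}\int_{\mathbb{R}^d} f(\mathbf{x}+\sigma\mathbf{u})\,e^{-\|\mathbf{u}\|_2^2}\,d\mathbf{u}$. $L$-smooth means differentiable with $L$-Lipschitz gradient. *)

theory Defs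
  imports "HOL-Analysis.Analysis"
begin

definition L_smooth :: "('a::euclidean_space \<Rightarrow> real) \<Rightarrow> real \<Rightarrow> bool" where
  "L_smooth f L \<longleftrightarrow>
     (\<exists>g. (\<forall>x. (f has_derivative (\<lambda>h. g x \<bullet> h)) (at x)) \<and>
          (\<forall>x y. norm (g x - g y) \<le> L * norm (x - y)))"

definition gauss_smooth :: "('a::euclidean_space \<Rightarrow> real) \<Rightarrow> real \<Rightarrow> 'a \<Rightarrow> real" where
  "gauss_smooth f \<sigma> x =
     pi powr (- real DIM('a) / 2) *
     (\<integral>u. f (x + \<sigma> *\<^sub>R u) * exp (- (norm u)\<^sup>2) \<partial>lborel)"

end

theory Submission
  imports Defs "HOL-Probability.Probability"
begin

text \<open>By the mean value theorem a function with L-Lipschitz gradient satisfies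
  |f(z + h) - f(z) - grad f(z) . h| <= L |h|^2, so its symmetric second difference
  f(z + h) + f(z - h) - 2 f(z) is at most 2 L |h|^2 in absolute value. The Gaussian weight is
  invariant under u -> -u, hence 2 (f_sigma(z) - f(z)) is the Gaussian average of these second
  differences at h = sigma u, and the second moment (d/2) pi^(d/2) of exp(-|u|^2) yields
  |f_sigma(z) - f(z)| <= L sigma^2 d / 2. The hypotheses give f(y) - f(x) > (4/3 - 1/4) sigma^2 L d,
  which exceeds the two approximation errors together.\<close>

lemma lipschitz_gradient_taylor_bound:
  fixes f :: "'a::euclidean_space \<Rightarrow> real"
  assumes der: "\<And>x. (f has_derivative (\<lambda>h. g x \<bullet> h)) (at x)"
    and lip: "\<And>x y. norm (g x - g y) \<le> L * norm (x - y)"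
  shows "\<bar>f (z + h) - f z - g z \<bullet> h\<bar> \<le> L * (norm h)\<^sup>2"
proof (cases "h = 0")
  case False
  define \<phi> where "\<phi> t = f (z + t *\<^sub>R h)" for t
  have "(\<phi> has_derivative (\<lambda>s. g (z + t *\<^sub>R h) \<bullet> (s *\<^sub>R h))) (at t within S)" for t S
    unfolding \<phi>_def by (rule has_derivative_compose[OF _ der]) (auto intro!: derivative_eq_intros)
  then obtain t where t: "t \<in> {0<..<1}" and mvt: "\<phi> 1 - \<phi> 0 = g (z + t *\<^sub>R h) \<bullet> h"
    using mvt_simple[of 0 1 \<phi> "\<lambda>t s. g (z + t *\<^sub>R h) \<bullet> (s *\<^sub>R h)"] by auto
  have "0 \<le> L * norm h"
    using lip[of "z + h" z] norm_ge_zero[of "g (z + h) - g z"] by (simp del: norm_ge_zero)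
  with False have "0 \<le> L"
    by (simp add: zero_le_mult_iff)
  have "\<bar>f (z + h) - f z - g z \<bullet> h\<bar> = \<bar>(g (z + t *\<^sub>R h) - g z) \<bullet> h\<bar>"
    using mvt by (simp add: \<phi>_def inner_diff_left)
  also have "\<dots> \<le> norm (g (z + t *\<^sub>R h) - g z) * norm h"
    by (rule Cauchy_Schwarz_ineq2)
  also have "\<dots> \<le> L * (t * norm h) * norm h"
    using lip[of "z + t *\<^sub>R h" z] t by (intro mult_right_mono) auto
  also have "\<dots> \<le> L * (norm h)\<^sup>2"
  proof -
    have "t * norm h * norm h \<le> norm h * norm h"
      using t by (intro mult_right_mono) (auto simp: mult_left_le_one_le)
    from mult_left_mono[OF this \<open>0 \<le> L\<close>] show ?thesis
      by (simp add: power2_eq_square mult.assoc)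
  qed
  finally show ?thesis .
qed simp

lemma lipschitz_gradient_second_difference_bound:
  fixes f :: "'a::euclidean_space \<Rightarrow> real"
  assumes "\<And>x. (f has_derivative (\<lambda>h. g x \<bullet> h)) (at x)"
    and "\<And>x y. norm (g x - g y) \<le> L * norm (x - y)"
  shows "\<bar>f (z + h) + f (z - h) - 2 * f z\<bar> \<le> 2 * L * (norm h)\<^sup>2"
proof -
  have "\<bar>f (z + h) - f z - g z \<bullet> h\<bar> \<le> L * (norm h)\<^sup>2"
    "\<bar>f (z - h) - f z + g z \<bullet> h\<bar> \<le> L * (norm h)\<^sup>2"
    using lipschitz_gradient_taylor_bound[OF assms, of z h] lipschitz_gradient_taylor_bound[OF assms, of z "- h"]
    by simp_all
  then show ?thesis
    by linarith
qed

lemma lipschitz_gradient_quadratic_growth: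
  fixes f :: "'a::euclidean_space \<Rightarrow> real"
  assumes "\<And>x. (f has_derivative (\<lambda>h. g x \<bullet> h)) (at x)"
    and "\<And>x y. norm (g x - g y) \<le> L * norm (x - y)"
  shows "\<bar>f (z + h)\<bar> \<le> \<bar>f z\<bar> + norm (g z) + (norm (g z) + \<bar>L\<bar>) * (norm h)\<^sup>2"
proof -
  have "norm h \<le> 1 + (norm h)\<^sup>2"
    using zero_le_power2[of "norm h - 1"] by (simp add: power2_diff) (use norm_ge_zero[of h] in linarith)
  then have "\<bar>g z \<bullet> h\<bar> \<le> norm (g z) * (1 + (norm h)\<^sup>2)"
    by (meson Cauchy_Schwarz_ineq2 mult_left_mono norm_ge_zero order_trans)
  moreover have "L * (norm h)\<^sup>2 \<le> \<bar>L\<bar> * (norm h)\<^sup>2"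
    by (simp add: mult_right_mono)
  moreover have "\<bar>f (z + h) - f z - g z \<bullet> h\<bar> \<le> L * (norm h)\<^sup>2"
    by (rule lipschitz_gradient_taylor_bound[OF assms])
  ultimately show ?thesis
    by (simp add: algebra_simps)
qed

lemma has_bochner_integral_lborel_prod_Basis:
  fixes \<phi> :: "'a::euclidean_space \<Rightarrow> real \<Rightarrow> real"
  assumes factor_integral: "\<And>b. b \<in> Basis \<Longrightarrow> has_bochner_integral lborel (\<phi> b) (I b)"
    and nonneg: "\<And>b x. b \<in> Basis \<Longrightarrow> 0 \<le> \<phi> b x"
  shows "has_bochner_integral lborel (\<lambda>u::'a. \<Prod>b\<in>Basis. \<phi> b (u \<bullet> b)) (\<Prod>b\<in>Basis. I b)"
proof (rule has_bochner_integral_nn_integral)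
  have meas: "\<phi> b \<in> borel_measurable borel" if "b \<in> Basis" for b
    using borel_measurable_has_bochner_integral[OF factor_integral[OF that]] by simp
  then show "(\<lambda>u::'a. \<Prod>b\<in>Basis. \<phi> b (u \<bullet> b)) \<in> borel_measurable lborel"
    by (intro borel_measurable_prod) auto
  have I: "0 \<le> I b" "(\<integral>\<^sup>+x. ennreal (\<phi> b x) \<partial>lborel) = ennreal (I b)" if "b \<in> Basis" for b
  proof -
    show "0 \<le> I b"
      using has_bochner_integral_integral_eq[OF factor_integral[OF that]] nonneg[OF that]
      by (metis Bochner_Integration.integral_nonneg)
    show "(\<integral>\<^sup>+x. ennreal (\<phi> b x) \<partial>lborel) = ennreal (I b)"
      using factor_integral[OF that] nonneg[OF that] nn_integral_eq_integral[of lborel "\<phi> b"]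
      by (simp add: has_bochner_integral_iff)
  qed
  then show "0 \<le> (\<Prod>b\<in>Basis. I b)"
    by (simp add: prod_nonneg)
  have "(\<integral>\<^sup>+u. ennreal (\<Prod>b\<in>Basis. \<phi> b (u \<bullet> b)) \<partial>(lborel::'a measure))
      = (\<integral>\<^sup>+u. (\<Prod>b\<in>Basis. ennreal (\<phi> b (u \<bullet> b))) \<partial>lborel)"
    using nonneg by (simp add: prod_ennreal)
  also have "\<dots> = (\<Prod>b\<in>Basis. \<integral>\<^sup>+x. ennreal (\<phi> b x) \<partial>lborel)"
    using meas nonneg by (intro nn_integral_lborel_prod) auto
  also have "\<dots> = ennreal (\<Prod>b\<in>Basis. I b)"
    using I by (simp add: prod_ennreal)
  finally show "(\<integral>\<^sup>+u. ennreal (\<Prod>b\<in>Basis. \<phi> b (u \<bullet> b)) \<partial>(lborel::'a measure)) = ennreal (\<Prod>b\<in>Basis. I b)" .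
qed (use nonneg in \<open>auto intro: prod_nonneg\<close>)

lemma has_bochner_integral_gaussian_even_moment:
  "has_bochner_integral lborel (\<lambda>x::real. x ^ (2 * k) * exp (- x\<^sup>2))
     (sqrt pi * fact (2 * k) / (4 ^ k * fact k))"
proof -
  have "has_bochner_integral lborel (\<lambda>x. normal_density 0 (1 / sqrt 2) x * (x - 0) ^ (2 * k))
      (fact (2 * k) / ((2 / (1 / sqrt 2)\<^sup>2) ^ k * fact k))"
    by (rule normal_moment_even) simp
  from has_bochner_integral_mult_left[OF this, of "sqrt pi"]
  show ?thesis
    by (simp add: normal_density_def power_divide real_sqrt_mult mult.commute)
qed

lemma has_bochner_integral_gaussian:
  "has_bochner_integral lborel (\<lambda>x::real. exp (- x\<^sup>2)) (sqrt pi)"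
  using has_bochner_integral_gaussian_even_moment[of 0] by simp

lemma has_bochner_integral_gaussian_second_moment:
  "has_bochner_integral lborel (\<lambda>x::real. x\<^sup>2 * exp (- x\<^sup>2)) (sqrt pi / 2)"
  using has_bochner_integral_gaussian_even_moment[of 1] by simp

lemma norm_sq_eq_sum_Basis: "(norm u)\<^sup>2 = (\<Sum>b\<in>Basis. (u \<bullet> b)\<^sup>2)"
  by (simp only: power2_norm_eq_inner) (subst euclidean_inner, simp add: power2_eq_square)

lemma exp_neg_norm_sq_eq_prod_Basis: "exp (- (norm u)\<^sup>2) = (\<Prod>b\<in>Basis. exp (- (u \<bullet> b)\<^sup>2))"
  by (simp add: norm_sq_eq_sum_Basis sum_negf[symmetric] exp_sum)

lemma has_bochner_integral_exp_neg_norm_sq: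
  "has_bochner_integral lborel (\<lambda>u::'a::euclidean_space. exp (- (norm u)\<^sup>2)) (sqrt pi ^ DIM('a))"
  using has_bochner_integral_lborel_prod_Basis[of "\<lambda>_ x. exp (- x\<^sup>2)" "\<lambda>_. sqrt pi"]
  by (simp add: has_bochner_integral_gaussian exp_neg_norm_sq_eq_prod_Basis)

lemma has_bochner_integral_norm_sq_exp_neg_norm_sq:
  "has_bochner_integral lborel (\<lambda>u::'a::euclidean_space. (norm u)\<^sup>2 * exp (- (norm u)\<^sup>2))
     (real DIM('a) / 2 * sqrt pi ^ DIM('a))"
proof -
  define \<phi> where "\<phi> b c x = (if c = b then x\<^sup>2 else 1) * exp (- x\<^sup>2)" for b c :: 'a and x :: real
  have split: "(u \<bullet> b)\<^sup>2 * exp (- (norm u)\<^sup>2) = (\<Prod>c\<in>Basis. \<phi> b c (u \<bullet> c))" if "b \<in> Basis" for b u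
    using that by (simp add: \<phi>_def prod.distrib exp_neg_norm_sq_eq_prod_Basis prod.delta')
  have "has_bochner_integral lborel (\<lambda>u::'a. \<Prod>c\<in>Basis. \<phi> b c (u \<bullet> c)) (sqrt pi ^ DIM('a) / 2)"
    if b: "b \<in> Basis" for b
  proof -
    have "has_bochner_integral lborel (\<lambda>u::'a. \<Prod>c\<in>Basis. \<phi> b c (u \<bullet> c))
        (\<Prod>c\<in>Basis. if c = b then sqrt pi / 2 else sqrt pi)"
      by (rule has_bochner_integral_lborel_prod_Basis)
        (auto simp: \<phi>_def has_bochner_integral_gaussian has_bochner_integral_gaussian_second_moment)
    moreover have "(\<Prod>c\<in>Basis. if c = b then sqrt pi / 2 else sqrt pi) = sqrt pi ^ DIM('a) / 2"
      using b DIM_positive[where 'a='a] by (simp add: prod_gen_delta power_eq_if)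
    ultimately show ?thesis by simp
  qed
  then have "has_bochner_integral lborel (\<lambda>u::'a. \<Sum>b\<in>Basis. (u \<bullet> b)\<^sup>2 * exp (- (norm u)\<^sup>2))
      (\<Sum>b\<in>(Basis::'a set). sqrt pi ^ DIM('a) / 2)"
    by (intro has_bochner_integral_sum) (simp add: split cong: sum.cong)
  then show ?thesis
    by (simp add: norm_sq_eq_sum_Basis sum_distrib_right[symmetric])
qed

lemma lborel_distr_uminus_euclidean: "distr lborel borel uminus = (lborel :: 'a::euclidean_space measure)"
  using lborel_affine[of "-1::real" "0::'a"] by (simp add: density_1)

lemma has_bochner_integral_lborel_reflect:
  fixes F :: "'a::euclidean_space \<Rightarrow> real"
  assumes "integrable lborel F"
  shows "has_bochner_integral lborel (\<lambda>u. F (- u)) (integral\<^sup>L lborel F)"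
proof -
  have [measurable]: "F \<in> borel_measurable borel"
    using assms by simp
  show ?thesis
    using assms integrable_distr_eq[of uminus lborel borel F] integral_distr[of uminus lborel borel F]
    by (simp add: lborel_distr_uminus_euclidean has_bochner_integral_iff)
qed

lemma integrable_times_exp_neg_norm_sq:
  fixes F :: "'a::euclidean_space \<Rightarrow> real"
  assumes [measurable]: "F \<in> borel_measurable borel"
    and growth: "\<And>u. \<bar>F u\<bar> \<le> A + B * (norm u)\<^sup>2"
  shows "integrable lborel (\<lambda>u. F u * exp (- (norm u)\<^sup>2))"
proof (rule Bochner_Integration.integrable_bound)
  show "integrable lborel (\<lambda>u::'a. A * exp (- (norm u)\<^sup>2) + B * ((norm u)\<^sup>2 * exp (- (norm u)\<^sup>2)))"
    by (intro Bochner_Integration.integrable_add integrable_mult_right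
        integrable.intros[OF has_bochner_integral_exp_neg_norm_sq]
        integrable.intros[OF has_bochner_integral_norm_sq_exp_neg_norm_sq])
  show "AE u in lborel. norm (F u * exp (- (norm u)\<^sup>2))
      \<le> norm (A * exp (- (norm u)\<^sup>2) + B * ((norm u)\<^sup>2 * exp (- (norm u)\<^sup>2)))"
  proof (rule AE_I2)
    fix u :: 'a
    have "\<bar>F u\<bar> * exp (- (norm u)\<^sup>2) \<le> (A + B * (norm u)\<^sup>2) * exp (- (norm u)\<^sup>2)"
      using growth by (intro mult_right_mono) auto
    then show "norm (F u * exp (- (norm u)\<^sup>2))
        \<le> norm (A * exp (- (norm u)\<^sup>2) + B * ((norm u)\<^sup>2 * exp (- (norm u)\<^sup>2)))"
      by (simp add: abs_mult algebra_simps)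
  qed
qed simp

lemma pi_powr_neg_half: "pi powr (- real n / 2) = inverse (sqrt pi ^ n)"
proof -
  have "sqrt pi ^ n = pi powr (real n / 2)"
    by (simp add: powr_half_sqrt[symmetric] powr_realpow[symmetric] powr_powr)
  then show ?thesis
    by (simp add: powr_minus)
qed

lemma lipschitz_gradient_integrable_gaussian_shift:
  fixes f :: "'a::euclidean_space \<Rightarrow> real"
  assumes der: "\<And>x. (f has_derivative (\<lambda>h. g x \<bullet> h)) (at x)"
    and lip: "\<And>x y. norm (g x - g y) \<le> L * norm (x - y)"
  shows "integrable lborel (\<lambda>u. f (z + \<sigma> *\<^sub>R u) * exp (- (norm u)\<^sup>2))"
proof (rule integrable_times_exp_neg_norm_sq)
  have "continuous_on UNIV f"
    using der by (meson continuous_at_imp_continuous_on has_derivative_continuous)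
  then have [measurable]: "f \<in> borel_measurable borel"
    by (rule borel_measurable_continuous_onI)
  show "(\<lambda>u. f (z + \<sigma> *\<^sub>R u)) \<in> borel_measurable borel"
    by measurable
  show "\<bar>f (z + \<sigma> *\<^sub>R u)\<bar> \<le> \<bar>f z\<bar> + norm (g z) + (norm (g z) + \<bar>L\<bar>) * \<sigma>\<^sup>2 * (norm u)\<^sup>2" for u
    using lipschitz_gradient_quadratic_growth[OF der lip, of z "\<sigma> *\<^sub>R u"]
    by (simp add: power_mult_distrib mult.assoc)
qed

lemma gaussian_average_second_difference_bound:
  fixes f :: "'a::euclidean_space \<Rightarrow> real"
  assumes shift_integrable: "integrable lborel (\<lambda>u. f (z + \<sigma> *\<^sub>R u) * exp (- (norm u)\<^sup>2))"
    and second_difference: "\<And>h. \<bar>f (z + h) + f (z - h) - 2 * f z\<bar> \<le> C * (norm h)\<^sup>2"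
  shows "\<bar>(\<integral>u. f (z + \<sigma> *\<^sub>R u) * exp (- (norm u)\<^sup>2) \<partial>lborel) - f z * sqrt pi ^ DIM('a)\<bar>
    \<le> C * \<sigma>\<^sup>2 * real DIM('a) / 4 * sqrt pi ^ DIM('a)"
proof -
  define w where "w u = exp (- (norm u)\<^sup>2)" for u :: 'a
  define F where "F u = f (z + \<sigma> *\<^sub>R u) * w u" for u
  define P where "P = sqrt pi ^ DIM('a)"
  have W0: "has_bochner_integral lborel w P"
    unfolding w_def P_def by (rule has_bochner_integral_exp_neg_norm_sq)
  have W2: "has_bochner_integral lborel (\<lambda>u. C * \<sigma>\<^sup>2 * ((norm u)\<^sup>2 * w u))
      (C * \<sigma>\<^sup>2 * (real DIM('a) / 2 * P))"
    unfolding w_def P_def by (intro has_bochner_integral_mult_right has_bochner_integral_norm_sq_exp_neg_norm_sq)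
  have "integrable lborel F"
    using shift_integrable by (simp add: F_def[abs_def] w_def)
  then have symmetrized: "has_bochner_integral lborel (\<lambda>u. F u + F (- u) - 2 * f z * w u)
      (integral\<^sup>L lborel F + integral\<^sup>L lborel F - 2 * f z * P)"
    by (intro has_bochner_integral_diff has_bochner_integral_add has_bochner_integral_mult_right
        has_bochner_integral_lborel_reflect W0 has_bochner_integral_integrable)
  have "\<bar>F u + F (- u) - 2 * f z * w u\<bar> \<le> C * \<sigma>\<^sup>2 * ((norm u)\<^sup>2 * w u)" for u
  proof -
    have "F u + F (- u) - 2 * f z * w u = (f (z + \<sigma> *\<^sub>R u) + f (z - \<sigma> *\<^sub>R u) - 2 * f z) * w u"
      by (simp add: F_def w_def algebra_simps)
    then have "\<bar>F u + F (- u) - 2 * f z * w u\<bar> = \<bar>f (z + \<sigma> *\<^sub>R u) + f (z - \<sigma> *\<^sub>R u) - 2 * f z\<bar> * w u"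
      by (simp add: w_def abs_mult)
    also have "\<dots> \<le> C * (norm (\<sigma> *\<^sub>R u))\<^sup>2 * w u"
      using second_difference[of "\<sigma> *\<^sub>R u"] by (intro mult_right_mono) (auto simp: w_def simp del: norm_scaleR)
    finally show ?thesis
      by (simp add: power_mult_distrib)
  qed
  then have "\<bar>integral\<^sup>L lborel (\<lambda>u. F u + F (- u) - 2 * f z * w u)\<bar>
      \<le> integral\<^sup>L lborel (\<lambda>u. C * \<sigma>\<^sup>2 * ((norm u)\<^sup>2 * w u))"
    by (intro integral_abs_bound_integral integrable.intros[OF symmetrized] integrable.intros[OF W2])
  then show ?thesis
    unfolding has_bochner_integral_integral_eq[OF symmetrized] has_bochner_integral_integral_eq[OF W2] abs_le_iff
    by (simp add: F_def[abs_def] w_def P_def field_simps)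
qed

lemma gauss_smooth_eq_integral_divide:
  "gauss_smooth f \<sigma> z = (\<integral>u. f (z + \<sigma> *\<^sub>R u) * exp (- (norm u)\<^sup>2) \<partial>lborel) / sqrt pi ^ DIM('a)"
  for f :: "'a::euclidean_space \<Rightarrow> real"
  unfolding gauss_smooth_def pi_powr_neg_half by (simp add: field_simps)

lemma abs_gauss_smooth_diff_le:
  fixes f :: "'a::euclidean_space \<Rightarrow> real"
  assumes "L_smooth f L"
  shows "\<bar>gauss_smooth f \<sigma> z - f z\<bar> \<le> L * \<sigma>\<^sup>2 * real DIM('a) / 2"
proof -
  obtain g where der: "\<And>x. (f has_derivative (\<lambda>h. g x \<bullet> h)) (at x)"
    and lip: "\<And>x y. norm (g x - g y) \<le> L * norm (x - y)"
    using assms unfolding L_smooth_def by blast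
  define I where "I = (\<integral>u. f (z + \<sigma> *\<^sub>R u) * exp (- (norm u)\<^sup>2) \<partial>lborel)"
  define P :: real where "P = sqrt pi ^ DIM('a)"
  have "\<bar>I - f z * P\<bar> \<le> L * \<sigma>\<^sup>2 * real DIM('a) / 2 * P"
    using gaussian_average_second_difference_bound[OF
        lipschitz_gradient_integrable_gaussian_shift[OF der lip]
        lipschitz_gradient_second_difference_bound[OF der lip]]
    by (simp add: I_def P_def field_simps)
  moreover have "gauss_smooth f \<sigma> z - f z = (I - f z * P) / P" and "P > 0"
    by (simp_all add: gauss_smooth_eq_integral_divide I_def P_def field_simps)
  ultimately show ?thesis
    by (simp add: abs_divide pos_divide_le_eq)
qed

theorem lemma3p6:
  fixes f :: "'a::euclidean_space \<Rightarrow> real"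
    and L \<sigma> \<epsilon> :: real and xstar x y :: 'a
  assumes "L > 0" and "L_smooth f L"
    and "\<forall>z. f xstar \<le> f z"
    and "\<sigma> > 0"
    and "\<epsilon> \<ge> 4 * \<sigma>\<^sup>2 * L * real DIM('a) / 3"
    and "f x - f xstar \<le> \<sigma>\<^sup>2 * L * real DIM('a) / 4"
    and "f y - f xstar > \<epsilon>"
  shows "gauss_smooth f \<sigma> x < gauss_smooth f \<sigma> y"
proof -
  have "0 < L * \<sigma>\<^sup>2 * real DIM('a)"
    using assms(1,4) by simp
  then have "f y - f x > L * \<sigma>\<^sup>2 * real DIM('a)"
    using assms(5-7) by (simp add: algebra_simps)
  then show ?thesis
    using abs_gauss_smooth_diff_le[OF assms(2), of \<sigma> x] abs_gauss_smooth_diff_le[OF assms(2), of \<sigma> y]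
    unfolding abs_le_iff by linarith
qed

end
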